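(* Let $f : \{0, 1\}^n \to \{0, 1\}$ be a Boolean function. Then $\lceil\log(\mathsf{NAADT}(f))\rceil \leq \mathsf{D}_{\mathrm{cc}}^\rightarrow(f \circ \mathsf{AND}) \leq \mathsf{NAADT}(f)$.
   Context: $\mathsf{AND}_S(x)=\prod_{i\in S}x_i$ for $S\subseteq[n]$. $\mathsf{NAADT}(f)$ is the minimum $k$ for which there exist $S_1,\dots,S_k\subseteq[n]$ such that $f(x)$ is determined by $\mathsf{AND}_{S_1}(x),\dots,\mathsf{AND}_{S_k}(x)$ for all $x$. $f\circ\mathsf{AND}$ is the two-party function $(x,y)\mapsto f(x_1\wedge y_1,\dots,x_n\wedge y_n)$ (Alice holds $x$, Bob $y$); $\mathsf{D}_{\mathrm{cc}}^\rightarrow$ is deterministic one-way communication complexity. Logarithms are base 2. *)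

theory Defs
  imports Complex_Main
begin

text \<open>Boolean inputs x in {0,1}^n are modelled as functions from a finite index
type 'n (with n = CARD('n)) to bool; True = 1, False = 0.\<close>

definition AND_on :: "'n set \<Rightarrow> ('n \<Rightarrow> bool) \<Rightarrow> bool" where
  "AND_on S x = (\<forall>i\<in>S. x i)"

definition NAADT :: "(('n::finite \<Rightarrow> bool) \<Rightarrow> bool) \<Rightarrow> nat" where
  "NAADT f = (LEAST k. \<exists>Ss :: 'n set list. length Ss = k \<and>
      (\<forall>x y. (\<forall>S\<in>set Ss. AND_on S x = AND_on S y) \<longrightarrow> f x = f y))"

text \<open>Composition f o AND: Alice holds x, Bob holds y.\<close>
definition comp_AND :: "(('n \<Rightarrow> bool) \<Rightarrow> bool) \<Rightarrow> ('n \<Rightarrow> bool) \<Rightarrow> ('n \<Rightarrow> bool) \<Rightarrow> bool" where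
  "comp_AND f x y = f (\<lambda>i. x i \<and> y i)"

definition D_oneway :: "('a \<Rightarrow> 'b \<Rightarrow> bool) \<Rightarrow> nat" where
  "D_oneway F = (LEAST c. \<exists>(m :: 'a \<Rightarrow> bool list) (g :: bool list \<Rightarrow> 'b \<Rightarrow> bool).
      (\<forall>x. length (m x) = c) \<and> (\<forall>x y. F x y = g (m x) y))"

end

theory Submission
  imports Defs
begin

text \<open>Upper bound: Alice sends the bits \<open>AND_S(x)\<close> for the sets of an optimal family; as
\<open>AND_S(x \<and> y) = AND_S(x) \<and> AND_S(y)\<close>, Bob then knows every \<open>AND_S(x \<and> y)\<close> and hence
\<open>f(x \<and> y)\<close>. Lower bound: a protocol of cost \<open>c\<close> leaves at most \<open>2^c\<close> distinct rows
\<open>R x = (\<lambda>y. f(x \<and> y))\<close>. If \<open>R x = R z\<close> then \<open>R (x \<and> z) = R z\<close>, so a representative of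
minimal weight of the row of \<open>z\<close> lies below \<open>z\<close>. The supports of these at most \<open>2^c\<close>
representatives determine \<open>f\<close>: if \<open>z, z'\<close> agree on their ANDs, then the representatives
\<open>C\<close> of \<open>z\<close> and \<open>D\<close> of \<open>z'\<close> satisfy \<open>C \<le> z'\<close> and \<open>D \<le> z\<close>, whence
\<open>f z = f C = f (C \<and> D) = f D = f z'\<close>.\<close>

definition AND_determines :: "(('n \<Rightarrow> bool) \<Rightarrow> bool) \<Rightarrow> 'n set set \<Rightarrow> bool" where
  "AND_determines f \<S> \<longleftrightarrow> (\<forall>x y. (\<forall>S\<in>\<S>. AND_on S x = AND_on S y) \<longrightarrow> f x = f y)"

definition has_oneway_protocol :: "('a \<Rightarrow> 'b \<Rightarrow> bool) \<Rightarrow> nat \<Rightarrow> bool" where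
  "has_oneway_protocol F c \<longleftrightarrow> (\<exists>(m :: 'a \<Rightarrow> bool list) (g :: bool list \<Rightarrow> 'b \<Rightarrow> bool).
      (\<forall>x. length (m x) = c) \<and> (\<forall>x y. F x y = g (m x) y))"

definition AND_profile :: "'n set list \<Rightarrow> ('n \<Rightarrow> bool) \<Rightarrow> bool list" where
  "AND_profile Ss x = map (\<lambda>S. AND_on S x) Ss"

lemma AND_on_conj: "AND_on S (\<lambda>i. x i \<and> y i) \<longleftrightarrow> AND_on S x \<and> AND_on S y"
  unfolding AND_on_def by auto

lemma AND_profile_conj:
  "AND_profile Ss (\<lambda>i. x i \<and> y i) = map2 (\<and>) (AND_profile Ss x) (AND_profile Ss y)"
  by (induction Ss) (simp_all add: AND_profile_def AND_on_conj)

lemma AND_determines_set_iff: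
  "AND_determines f (set Ss) \<longleftrightarrow> (\<forall>x y. AND_profile Ss x = AND_profile Ss y \<longrightarrow> f x = f y)"
  by (simp add: AND_determines_def AND_profile_def)

lemma AND_determines_factors_through_profile:
  assumes "AND_determines f (set Ss)"
  shows "\<exists>h. \<forall>x. f x = h (AND_profile Ss x)"
proof (intro exI allI)
  fix x
  let ?z = "SOME z. AND_profile Ss z = AND_profile Ss x"
  have "AND_profile Ss ?z = AND_profile Ss x"
    by (rule someI[of "\<lambda>z. AND_profile Ss z = AND_profile Ss x"]) (rule refl)
  with assms have "f ?z = f x"
    unfolding AND_determines_set_iff by blast
  then show "f x = (\<lambda>p. f (SOME z. AND_profile Ss z = p)) (AND_profile Ss x)"
    by simp
qed

lemma AND_determines_UNIV: "AND_determines (f :: ('n \<Rightarrow> bool) \<Rightarrow> bool) UNIV"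
  unfolding AND_determines_def
proof (intro allI impI)
  fix x y :: "'n \<Rightarrow> bool"
  assume "\<forall>S\<in>UNIV. AND_on S x = AND_on S y"
  then have "AND_on {i} x = AND_on {i} y" for i
    by blast
  then have "x = y"
    by (auto simp: AND_on_def)
  then show "f x = f y"
    by simp
qed

lemma NAADT_eq_Least:
  "NAADT f = (LEAST k. \<exists>Ss. length Ss = k \<and> AND_determines f (set Ss))"
  by (simp add: NAADT_def AND_determines_def)

lemma NAADT_attained:
  fixes f :: "('n::finite \<Rightarrow> bool) \<Rightarrow> bool"
  obtains Ss where "length Ss = NAADT f" "AND_determines f (set Ss)"
proof -
  let ?P = "\<lambda>k. \<exists>Ss. length Ss = k \<and> AND_determines f (set Ss)"
  obtain Ss0 :: "'n set list" where "set Ss0 = UNIV"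
    using finite_list[OF finite] by blast
  then have "?P (length Ss0)"
    using AND_determines_UNIV[of f] by metis
  then have "?P (NAADT f)"
    unfolding NAADT_eq_Least by (rule LeastI[where P = ?P])
  with that show thesis
    by blast
qed

lemma NAADT_le_card:
  fixes f :: "('n::finite \<Rightarrow> bool) \<Rightarrow> bool"
  assumes "AND_determines f \<S>"
  shows "NAADT f \<le> card \<S>"
proof -
  obtain Ss where "set Ss = \<S>" "distinct Ss"
    using finite_distinct_list[OF finite] by blast
  with assms show ?thesis
    unfolding NAADT_eq_Least by (metis (mono_tags) Least_le distinct_card)
qed

lemma D_oneway_eq_Least: "D_oneway F = (LEAST c. has_oneway_protocol F c)"
  by (simp add: D_oneway_def has_oneway_protocol_def)

lemma D_oneway_le: "has_oneway_protocol F c \<Longrightarrow> D_oneway F \<le> c"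
  unfolding D_oneway_eq_Least by (rule Least_le)

lemma has_oneway_protocol_D_oneway:
  "has_oneway_protocol F c \<Longrightarrow> has_oneway_protocol F (D_oneway F)"
  unfolding D_oneway_eq_Least by (rule LeastI)

lemma card_range_le_if_has_oneway_protocol:
  assumes "has_oneway_protocol F c"
  shows "card (range F) \<le> 2 ^ c"
proof -
  obtain m :: "'a \<Rightarrow> bool list" and g :: "bool list \<Rightarrow> 'b \<Rightarrow> bool"
    where len: "\<forall>x. length (m x) = c" and F: "\<forall>x y. F x y = g (m x) y"
    using assms unfolding has_oneway_protocol_def by blast
  let ?msgs = "{xs :: bool list. length xs = c}"
  have fin: "finite ?msgs"
    using finite_lists_length_eq[of "UNIV :: bool set" c] by simp
  have "F x = g (m x)" for x
    using F by blast
  then have "range F \<subseteq> g ` ?msgs"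
    using len by auto
  then have "card (range F) \<le> card (g ` ?msgs)"
    using fin by (intro card_mono) auto
  also have "\<dots> \<le> card ?msgs"
    using fin by (rule card_image_le)
  also have "\<dots> = 2 ^ c"
    using card_lists_length_eq[of "UNIV :: bool set" c] by simp
  finally show ?thesis .
qed

lemma has_oneway_protocol_if_AND_determines:
  assumes "AND_determines f (set Ss)"
  shows "has_oneway_protocol (comp_AND f) (length Ss)"
proof -
  obtain h where h: "\<forall>x. f x = h (AND_profile Ss x)"
    using AND_determines_factors_through_profile[OF assms] ..
  have "comp_AND f x y = h (map2 (\<and>) (AND_profile Ss x) (AND_profile Ss y))" for x y
    by (simp only: comp_AND_def h[rule_format] AND_profile_conj)
  moreover have "length (AND_profile Ss x) = length Ss" for x
    by (simp add: AND_profile_def)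
  ultimately show ?thesis
    unfolding has_oneway_protocol_def
    by (intro exI[of _ "AND_profile Ss"] exI[of _ "\<lambda>w y. h (map2 (\<and>) w (AND_profile Ss y))"]) simp
qed

lemma comp_AND_meet_same_row:
  assumes "comp_AND f x = comp_AND f z"
  shows "comp_AND f (\<lambda>i. x i \<and> z i) = comp_AND f z"
proof
  fix y
  have "comp_AND f (\<lambda>i. x i \<and> z i) y = comp_AND f x (\<lambda>i. z i \<and> y i)"
    by (simp add: comp_AND_def)
  also have "\<dots> = comp_AND f z (\<lambda>i. z i \<and> y i)"
    using assms by simp
  also have "\<dots> = comp_AND f z y"
    by (simp add: comp_AND_def)
  finally show "comp_AND f (\<lambda>i. x i \<and> z i) y = comp_AND f z y" .
qed

definition row_rep :: "(('n \<Rightarrow> bool) \<Rightarrow> bool) \<Rightarrow> (('n \<Rightarrow> bool) \<Rightarrow> bool) \<Rightarrow> 'n \<Rightarrow> bool" where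
  "row_rep f \<rho> = arg_min (\<lambda>x. card {i. x i}) (\<lambda>x. comp_AND f x = \<rho>)"

lemma
  fixes f :: "('n::finite \<Rightarrow> bool) \<Rightarrow> bool"
  shows comp_AND_row_rep: "comp_AND f (row_rep f (comp_AND f z)) = comp_AND f z"
    and row_rep_le: "row_rep f (comp_AND f z) i \<Longrightarrow> z i"
proof -
  let ?r = "row_rep f (comp_AND f z)"
  have in_row: "comp_AND f ?r = comp_AND f z"
    and minimal: "comp_AND f w = comp_AND f z \<Longrightarrow> card {i. ?r i} \<le> card {i. w i}" for w
    using arg_min_nat_lemma[of "\<lambda>x. comp_AND f x = comp_AND f z" z "\<lambda>x. card {i. x i}"]
    by (auto simp: row_rep_def)
  show "comp_AND f ?r = comp_AND f z"
    by (fact in_row)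
  assume "?r i"
  have "card {i. ?r i} \<le> card {i. ?r i \<and> z i}"
    using minimal comp_AND_meet_same_row[OF in_row] by blast
  then have "{i. ?r i \<and> z i} = {i. ?r i}"
    by (intro card_seteq) auto
  with \<open>?r i\<close> show "z i" by blast
qed

lemma AND_determines_row_rep_supports:
  fixes f :: "('n::finite \<Rightarrow> bool) \<Rightarrow> bool"
  shows "AND_determines f ((\<lambda>\<rho>. {i. row_rep f \<rho> i}) ` range (comp_AND f))"
  unfolding AND_determines_def
proof (intro allI impI)
  fix z z' :: "'n \<Rightarrow> bool"
  assume agree: "\<forall>S\<in>(\<lambda>\<rho>. {i. row_rep f \<rho> i}) ` range (comp_AND f). AND_on S z = AND_on S z'"
  let ?C = "row_rep f (comp_AND f z)" and ?D = "row_rep f (comp_AND f z')"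
  have "AND_on {i. ?C i} z"
    using row_rep_le by (auto simp: AND_on_def)
  then have C_below: "(\<lambda>i. z' i \<and> ?C i) = ?C"
    using agree by (auto simp: AND_on_def)
  have "AND_on {i. ?D i} z'"
    using row_rep_le by (auto simp: AND_on_def)
  then have D_below: "(\<lambda>i. z i \<and> ?D i) = ?D"
    using agree by (auto simp: AND_on_def)
  have "f z = comp_AND f ?C (\<lambda>_. True)"
    using comp_AND_row_rep[of f z] by (simp add: comp_AND_def)
  also have "\<dots> = comp_AND f z' ?C"
    using C_below by (simp add: comp_AND_def)
  also have "\<dots> = comp_AND f ?D ?C"
    using comp_AND_row_rep[of f z'] by simp
  also have "\<dots> = comp_AND f ?C ?D"
    by (simp add: comp_AND_def conj_commute)
  also have "\<dots> = comp_AND f z ?D"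
    using comp_AND_row_rep[of f z] by simp
  also have "\<dots> = comp_AND f ?D (\<lambda>_. True)"
    using D_below by (simp add: comp_AND_def)
  also have "\<dots> = f z'"
    using comp_AND_row_rep[of f z'] by (simp add: comp_AND_def)
  finally show "f z = f z'" .
qed

lemma NAADT_le_card_rows:
  fixes f :: "('n::finite \<Rightarrow> bool) \<Rightarrow> bool"
  shows "NAADT f \<le> card (range (comp_AND f))"
proof -
  have "NAADT f \<le> card ((\<lambda>\<rho>. {i. row_rep f \<rho> i}) ` range (comp_AND f))"
    by (rule NAADT_le_card[OF AND_determines_row_rep_supports])
  also have "\<dots> \<le> card (range (comp_AND f))"
    by (rule card_image_le) simp
  finally show ?thesis .
qed

lemma ceiling_log2_le_if_le_pow2:
  assumes "n \<le> 2 ^ c"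
  shows "\<lceil>log 2 (real n)\<rceil> \<le> int c"
proof (cases "n = 0")
  case False
  then have "log 2 (real n) \<le> log 2 (2 ^ c)"
    using assms by (subst log_le_cancel_iff) (auto simp flip: of_nat_power)
  then show ?thesis
    by (simp add: ceiling_le_iff)
qed (simp add: log_def)

theorem claim4p3:
  fixes f :: "('n::finite \<Rightarrow> bool) \<Rightarrow> bool"
  shows "\<lceil>log 2 (real (NAADT f))\<rceil> \<le> int (D_oneway (comp_AND f))
       \<and> D_oneway (comp_AND f) \<le> NAADT f"
proof
  obtain Ss where len: "length Ss = NAADT f" and det: "AND_determines f (set Ss)"
    using NAADT_attained .
  have protocol: "has_oneway_protocol (comp_AND f) (NAADT f)"
    using has_oneway_protocol_if_AND_determines[OF det] len by simp
  then show "D_oneway (comp_AND f) \<le> NAADT f"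
    by (rule D_oneway_le)
  have "NAADT f \<le> card (range (comp_AND f))"
    by (rule NAADT_le_card_rows)
  also have "\<dots> \<le> 2 ^ D_oneway (comp_AND f)"
    using card_range_le_if_has_oneway_protocol has_oneway_protocol_D_oneway[OF protocol] .
  finally show "\<lceil>log 2 (real (NAADT f))\<rceil> \<le> int (D_oneway (comp_AND f))"
    by (rule ceiling_log2_le_if_le_pow2)
qed

end
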